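(* Let $f$ be a homeomorphism of a compact metric space $(X,d)$ with the shadowing property such that for every $\epsilon>0$ there is $\delta>0$ with: $d(x,y)<\delta$ implies $V^s_\epsilon(x)\cap V^u_\epsilon(y)\ne\emptyset$. Then $f$ has the limit shadowing property.
   Context: Shadowing: for every $\varepsilon>0$ there is $\delta>0$ such that for every sequence $(x_k)_{k\in\mathbb{Z}}$ with $d(f(x_k),x_{k+1})<\delta$ for all $k$ there is $y$ with $d(f^k(y),x_k)<\varepsilon$ for all $k\in\mathbb{Z}$. $W^s_\epsilon(x)=\{y: d(f^n(x),f^n(y))\le\epsilon\ \forall n\ge0\}$, $W^u_\epsilon(x)=\{y: d(f^{-n}(x),f^{-n}(y))\le\epsilon\ \forall n\ge0\}$, $W^s(x)=\{y: d(f^n(x),f^n(y))\to0\ (n\to+\infty)\}$, $W^u(x)=\{y: d(f^{-n}(x),f^{-n}(y))\to0\ (n\to+\infty)\}$, $V^s_\epsilon(x)=W^s(x)\cap W^s_\epsilon(x)$, $V^u_\epsilon(x)=W^u(x)\cap W^u_\epsilon(x)$. $f$ has the limit shadowing property if for every sequence $(x_k)_{k\in\mathbb{N}}$ with $d(f(x_k),x_{k+1})\to0$ as $k\to\infty$ there is $y\in X$ with $d(f^k(y),x_k)\to0$ as $k\to\infty$. *)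

theory Defs
  imports "HOL-Analysis.Analysis"
begin

definition finv :: "'a set \<Rightarrow> ('a \<Rightarrow> 'a) \<Rightarrow> 'a \<Rightarrow> 'a" where
  "finv X f = inv_into X f"

definition shadowing :: "'a::metric_space set \<Rightarrow> ('a \<Rightarrow> 'a) \<Rightarrow> bool" where
  "shadowing X f \<longleftrightarrow> (\<forall>\<epsilon>>0. \<exists>\<delta>>0. \<forall>x :: int \<Rightarrow> 'a.
     (\<forall>k. x k \<in> X) \<longrightarrow> (\<forall>k. dist (f (x k)) (x (k + 1)) < \<delta>) \<longrightarrow>
     (\<exists>y\<in>X. (\<forall>n::nat. dist ((f ^^ n) y) (x (int n)) < \<epsilon>) \<and>
             (\<forall>n::nat. dist ((finv X f ^^ n) y) (x (- int n)) < \<epsilon>)))"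

definition Ws_eps :: "'a::metric_space set \<Rightarrow> ('a \<Rightarrow> 'a) \<Rightarrow> real \<Rightarrow> 'a \<Rightarrow> 'a set" where
  "Ws_eps X f \<epsilon> x = {y\<in>X. \<forall>n. dist ((f ^^ n) x) ((f ^^ n) y) \<le> \<epsilon>}"

definition Wu_eps :: "'a::metric_space set \<Rightarrow> ('a \<Rightarrow> 'a) \<Rightarrow> real \<Rightarrow> 'a \<Rightarrow> 'a set" where
  "Wu_eps X f \<epsilon> x = {y\<in>X. \<forall>n. dist ((finv X f ^^ n) x) ((finv X f ^^ n) y) \<le> \<epsilon>}"

definition Ws :: "'a::metric_space set \<Rightarrow> ('a \<Rightarrow> 'a) \<Rightarrow> 'a \<Rightarrow> 'a set" where
  "Ws X f x = {y\<in>X. (\<lambda>n. dist ((f ^^ n) x) ((f ^^ n) y)) \<longlonglongrightarrow> 0}"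

definition Wu :: "'a::metric_space set \<Rightarrow> ('a \<Rightarrow> 'a) \<Rightarrow> 'a \<Rightarrow> 'a set" where
  "Wu X f x = {y\<in>X. (\<lambda>n. dist ((finv X f ^^ n) x) ((finv X f ^^ n) y)) \<longlonglongrightarrow> 0}"

definition Vs_eps :: "'a::metric_space set \<Rightarrow> ('a \<Rightarrow> 'a) \<Rightarrow> real \<Rightarrow> 'a \<Rightarrow> 'a set" where
  "Vs_eps X f \<epsilon> x = Ws X f x \<inter> Ws_eps X f \<epsilon> x"

definition Vu_eps :: "'a::metric_space set \<Rightarrow> ('a \<Rightarrow> 'a) \<Rightarrow> real \<Rightarrow> 'a \<Rightarrow> 'a set" where
  "Vu_eps X f \<epsilon> x = Wu X f x \<inter> Wu_eps X f \<epsilon> x"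

definition limit_shadowing :: "'a::metric_space set \<Rightarrow> ('a \<Rightarrow> 'a) \<Rightarrow> bool" where
  "limit_shadowing X f \<longleftrightarrow> (\<forall>x :: nat \<Rightarrow> 'a. (\<forall>k. x k \<in> X) \<longrightarrow>
     (\<lambda>k. dist (f (x k)) (x (Suc k))) \<longlonglongrightarrow> 0 \<longrightarrow>
     (\<exists>y\<in>X. (\<lambda>k. dist ((f ^^ k) y) (x k)) \<longlonglongrightarrow> 0))"

end

theory Submission
  imports Defs
begin

text \<open>Let x be a sequence whose jumps d(f(x k), x (k+1)) tend to 0, and let
\<eta> j = 2^-j. Shadowing a far enough tail of x produces, for every j, a true orbit
following x from some time on within a tolerance much smaller than \<eta> j. These orbits are
spliced together one after another: if the orbit of q follows x closely after time K, the
hypothesis applied near f^K q gives a point w whose backward orbit stays \<eta> j-close to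
that of f^K q and whose forward orbit is asymptotic to the next, finer shadowing orbit.
Pulling w back by K steps yields a point whose orbit is \<eta> j-close to that of q up to
time K and follows x with the finer tolerance afterwards. The orbits of the successive points
converge on ever longer time windows, and an accumulation point of them (compactness)
has an orbit asymptotic to x.\<close>

context
  fixes X :: "'a set" and f :: "'a \<Rightarrow> 'a"
  assumes bij: "bij_betw f X X"
begin

lemma funpow_in: "z \<in> X \<Longrightarrow> (f ^^ n) z \<in> X"
  using bij_betw_funpow[OF bij] bij_betwE by blast

lemma inv_funpow_in: "z \<in> X \<Longrightarrow> (inv_into X f ^^ n) z \<in> X"
  using bij_betw_funpow[OF bij_betw_inv_into[OF bij]] bij_betwE by blast

lemma inv_funpow_funpow: "z \<in> X \<Longrightarrow> (inv_into X f ^^ n) ((f ^^ n) z) = z"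
proof (induction n)
  case (Suc n)
  have "(inv_into X f ^^ Suc n) ((f ^^ Suc n) z)
      = (inv_into X f ^^ n) (inv_into X f (f ((f ^^ n) z)))"
    by (metis comp_apply funpow.simps(2) funpow_Suc_right)
  also have "\<dots> = z"
    using Suc funpow_in bij by (simp add: bij_betw_def)
  finally show ?case .
qed simp

lemma funpow_inv_funpow_le:
  assumes "w \<in> X" "k \<le> K"
  shows "(f ^^ k) ((inv_into X f ^^ K) w) = (inv_into X f ^^ (K - k)) w"
  using assms(2)
proof (induction k)
  case (Suc k)
  then have "K - k = Suc (K - Suc k)" by arith
  then have "(f ^^ Suc k) ((inv_into X f ^^ K) w)
      = f (inv_into X f ((inv_into X f ^^ (K - Suc k)) w))"
    using Suc by simp
  also have "\<dots> = (inv_into X f ^^ (K - Suc k)) w"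
    using inv_funpow_in[OF assms(1)] bij by (simp add: bij_betw_def f_inv_into_f)
  finally show ?case .
qed simp

lemma funpow_inv_funpow_ge:
  assumes "w \<in> X" "K \<le> k"
  shows "(f ^^ k) ((inv_into X f ^^ K) w) = (f ^^ (k - K)) w"
proof -
  have "(f ^^ k) ((inv_into X f ^^ K) w) = (f ^^ (k - K)) ((f ^^ K) ((inv_into X f ^^ K) w))"
    using assms(2) by (metis funpow_add le_add_diff_inverse2 comp_apply)
  then show ?thesis
    using funpow_inv_funpow_le[OF assms(1), of K K] by simp
qed

lemma inv_funpow_diff_funpow:
  assumes "z \<in> X" "k \<le> K"
  shows "(inv_into X f ^^ (K - k)) ((f ^^ K) z) = (f ^^ k) z"
proof -
  have "(f ^^ K) z = (f ^^ (K - k)) ((f ^^ k) z)"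
    using assms(2) by (metis funpow_add le_add_diff_inverse2 comp_apply)
  then show ?thesis
    using inv_funpow_funpow funpow_in assms(1) by simp
qed

end

lemma continuous_on_funpow:
  assumes "continuous_on X f" "f ` X \<subseteq> X"
  shows "continuous_on X (f ^^ n)"
proof (induction n)
  case (Suc n)
  have "(f ^^ n) ` X \<subseteq> X"
    using assms(2) by (induction n) auto
  then have "continuous_on X (f \<circ> (f ^^ n))"
    using Suc continuous_on_subset[OF assms(1)] by (intro continuous_on_compose)
  then show ?case by simp
qed simp

lemma strict_mono_bracket:
  fixes K :: "nat \<Rightarrow> nat"
  assumes "strict_mono K" "K j \<le> n"
  shows "\<exists>i\<ge>j. K i \<le> n \<and> n < K (Suc i)"
proof -
  define m where "m = (LEAST i. n < K i)"
  have "n < K (Suc n)"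
    using seq_suble[OF assms(1), of "Suc n"] by simp
  then have m: "n < K m"
    unfolding m_def by (rule LeastI)
  have "j < m"
  proof (rule ccontr)
    assume "\<not> j < m"
    then have "K m \<le> K j"
      using assms(1) by (simp add: strict_mono_less_eq)
    then show False
      using m assms(2) by simp
  qed
  then obtain i where "m = Suc i" "j \<le> i"
    by (cases m) auto
  moreover have "\<not> n < K i"
    using not_less_Least[of i "\<lambda>i. n < K i"] \<open>m = Suc i\<close> m_def by simp
  ultimately show ?thesis
    using m by (intro exI[of _ i]) auto
qed

lemma orbit_limit_of_refining_points:
  fixes X :: "'a::metric_space set" and q :: "nat \<Rightarrow> 'a" and K :: "nat \<Rightarrow> nat"
  assumes "compact X" "continuous_on X f" "f ` X \<subseteq> X" "\<And>j. q j \<in> X" "strict_mono K"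
    and refine: "\<And>j k. k \<le> K (Suc j) \<Longrightarrow>
      dist ((f ^^ k) (q (Suc j))) ((f ^^ k) (q j)) \<le> (1/2) ^ Suc j"
  shows "\<exists>y\<in>X. \<forall>j k. k \<le> K (Suc j) \<longrightarrow> dist ((f ^^ k) y) ((f ^^ k) (q j)) \<le> (1/2) ^ j"
proof -
  have chain: "dist ((f ^^ k) (q (j + m))) ((f ^^ k) (q j)) \<le> (1/2) ^ j - (1/2) ^ (j + m)"
    if "k \<le> K (Suc j)" for j k m
  proof (induction m)
    case (Suc m)
    have "K (Suc j) \<le> K (Suc (j + m))"
      using assms(5) by (simp add: strict_mono_less_eq)
    then have "dist ((f ^^ k) (q (Suc (j + m)))) ((f ^^ k) (q (j + m))) \<le> (1/2) ^ Suc (j + m)"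
      using refine that by simp
    then show ?case
      using Suc dist_triangle[of "(f ^^ k) (q (j + Suc m))" "(f ^^ k) (q j)" "(f ^^ k) (q (j + m))"]
      by simp
  qed simp
  obtain y r where "y \<in> X" "strict_mono r" and qr: "(q \<circ> r) \<longlonglongrightarrow> y"
    using seq_compactE[OF compact_imp_seq_compact[OF assms(1)]] assms(4) by metis
  have "dist ((f ^^ k) y) ((f ^^ k) (q j)) \<le> (1/2) ^ j" if "k \<le> K (Suc j)" for j k
  proof (rule LIMSEQ_le_const2)
    show "(\<lambda>m. dist ((f ^^ k) ((q \<circ> r) m)) ((f ^^ k) (q j)))
        \<longlonglongrightarrow> dist ((f ^^ k) y) ((f ^^ k) (q j))"
      using continuous_on_tendsto_compose[OF continuous_on_funpow[OF assms(2,3)] qr \<open>y \<in> X\<close>]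
        assms(4) by (intro tendsto_intros) auto
    show "\<exists>N. \<forall>m\<ge>N. dist ((f ^^ k) ((q \<circ> r) m)) ((f ^^ k) (q j)) \<le> (1/2) ^ j"
    proof (intro exI allI impI)
      fix m assume "j \<le> m"
      then obtain d where "r m = j + d"
        using seq_suble[OF \<open>strict_mono r\<close>, of m] le_Suc_ex le_trans by blast
      then have "dist ((f ^^ k) ((q \<circ> r) m)) ((f ^^ k) (q j)) \<le> (1/2) ^ j - (1/2) ^ (j + d)"
        using chain[OF that, of d] by simp
      moreover have "(0::real) \<le> (1/2) ^ (j + d)"
        by simp
      ultimately show "dist ((f ^^ k) ((q \<circ> r) m)) ((f ^^ k) (q j)) \<le> (1/2) ^ j"
        by linarith
    qed
  qed
  then show ?thesis
    using \<open>y \<in> X\<close> by blast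
qed

lemma limit_of_refining_orbits:
  fixes X :: "'a::metric_space set" and q :: "nat \<Rightarrow> 'a" and K :: "nat \<Rightarrow> nat"
  assumes "compact X" "continuous_on X f" "f ` X \<subseteq> X" "\<And>j. q j \<in> X" "strict_mono K"
    and refine: "\<And>j k. k \<le> K (Suc j) \<Longrightarrow>
      dist ((f ^^ k) (q (Suc j))) ((f ^^ k) (q j)) \<le> (1/2) ^ Suc j"
    and track: "\<And>j k. K j \<le> k \<Longrightarrow> dist ((f ^^ k) (q j)) (x k) \<le> 2 * (1/2) ^ j"
  shows "\<exists>y\<in>X. (\<lambda>k. dist ((f ^^ k) y) (x k)) \<longlonglongrightarrow> 0"
proof -
  obtain y where "y \<in> X"
    and near_y: "\<And>j k. k \<le> K (Suc j) \<Longrightarrow> dist ((f ^^ k) y) ((f ^^ k) (q j)) \<le> (1/2) ^ j"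
    using orbit_limit_of_refining_points[OF assms(1-5) refine] by blast
  have close: "dist ((f ^^ n) y) (x n) \<le> 3 * (1/2) ^ j" if Kjn: "K j \<le> n" for j n
  proof -
    obtain i where "j \<le> i" "K i \<le> n" "n < K (Suc i)"
      using strict_mono_bracket[OF assms(5) Kjn] by blast
    then have "dist ((f ^^ n) y) (x n) \<le> (1/2) ^ i + 2 * (1/2) ^ i"
      using near_y[of n i] track[of i n] dist_triangle[of "(f ^^ n) y" "x n" "(f ^^ n) (q i)"]
      by simp
    also have "\<dots> \<le> 3 * (1/2) ^ j"
      using \<open>j \<le> i\<close> by (simp add: power_decreasing)
    finally show ?thesis .
  qed
  show ?thesis
  proof (intro bexI[OF _ \<open>y \<in> X\<close>] LIMSEQ_I)
    fix e :: real assume "0 < e"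
    then obtain j where "(1/2::real) ^ j < e / 3"
      using real_arch_pow_inv[of "e/3" "1/2::real"] by auto
    then show "\<exists>N. \<forall>n\<ge>N. norm (dist ((f ^^ n) y) (x n) - 0) < e"
      using close[of j] by (intro exI[of _ "K j"]) force
  qed
qed

lemma exists_tolerances:
  fixes \<eta> \<Delta> :: "nat \<Rightarrow> real"
  assumes "\<And>j. 0 < \<eta> j" "\<And>j. 0 < \<Delta> j"
  shows "\<exists>\<epsilon>. \<forall>j. 0 < \<epsilon> j \<and> \<epsilon> j \<le> \<eta> j \<and> 2 * \<epsilon> j + \<epsilon> (Suc j) \<le> \<Delta> (Suc j)"
proof -
  define \<epsilon> where "\<epsilon> j = min (\<eta> j) (min (\<Delta> j) (\<Delta> (Suc j)) / 3)" for j
  have third: "\<epsilon> j \<le> \<Delta> (Suc j) / 3" "\<epsilon> (Suc j) \<le> \<Delta> (Suc j) / 3" for j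
    by (simp_all add: \<epsilon>_def)
  have "2 * \<epsilon> j + \<epsilon> (Suc j) \<le> \<Delta> (Suc j)" for j
    using third[of j] by linarith
  moreover have "0 < \<epsilon> j" "\<epsilon> j \<le> \<eta> j" for j
    using assms by (simp_all add: \<epsilon>_def)
  ultimately show ?thesis
    by blast
qed

context
  fixes X :: "'a::metric_space set" and f :: "'a \<Rightarrow> 'a"
  assumes bij: "bij_betw f X X"
begin

lemma shadowing_tail:
  assumes "shadowing X f" "\<And>k. x k \<in> X"
    and "(\<lambda>k. dist (f (x k)) (x (Suc k))) \<longlonglongrightarrow> 0" "0 < e"
  shows "\<exists>T. \<exists>p\<in>X. \<forall>n. dist ((f ^^ n) p) (x (T + n)) < e"
proof -
  obtain \<delta> where "0 < \<delta>" and shadow: "\<And>z :: int \<Rightarrow> 'a. \<forall>k. z k \<in> X \<Longrightarrow>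
      \<forall>k. dist (f (z k)) (z (k + 1)) < \<delta> \<Longrightarrow>
      \<exists>y\<in>X. (\<forall>n::nat. dist ((f ^^ n) y) (z (int n)) < e) \<and>
        (\<forall>n::nat. dist ((finv X f ^^ n) y) (z (- int n)) < e)"
    using assms(1,4) unfolding shadowing_def by blast
  obtain T where T: "\<And>k. T \<le> k \<Longrightarrow> dist (f (x k)) (x (Suc k)) < \<delta>"
    using order_tendstoD(2)[OF assms(3) \<open>0 < \<delta>\<close>] unfolding eventually_sequentially by blast
  \<comment> \<open>Before time T follow the backward orbit of x T, which has no jumps at all.\<close>
  define z where "z i = (if 0 \<le> i then x (T + nat i) else (inv_into X f ^^ nat (- i)) (x T))"
    for i :: int
  have "\<forall>k. z k \<in> X"
    unfolding z_def using assms(2) inv_funpow_in[OF bij] by simp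
  moreover have "\<forall>k. dist (f (z k)) (z (k + 1)) < \<delta>"
  proof
    fix k :: int
    consider "0 \<le> k" | "k < 0" by linarith
    then show "dist (f (z k)) (z (k + 1)) < \<delta>"
    proof cases
      case 1
      then have "nat (k + 1) = Suc (nat k)" by simp
      then show ?thesis using 1 T[of "T + nat k"] unfolding z_def by simp
    next
      case 2
      then have "nat (- k) = Suc (nat (- (k + 1)))" by simp
      then have "f (z k) = z (k + 1)"
        unfolding z_def using 2 inv_funpow_in[OF bij] assms(2) bij
        by (simp add: bij_betw_def f_inv_into_f)
      then show ?thesis using \<open>0 < \<delta>\<close> by simp
    qed
  qed
  ultimately obtain p where "p \<in> X" "\<forall>n::nat. dist ((f ^^ n) p) (z (int n)) < e"
    using shadow by blast
  then show ?thesis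
    unfolding z_def by auto
qed

lemma Wu_eps_pullback:
  assumes "q \<in> X" "w \<in> Wu_eps X f \<eta> ((f ^^ K) q)" "k \<le> K"
  shows "dist ((f ^^ k) ((inv_into X f ^^ K) w)) ((f ^^ k) q) \<le> \<eta>"
proof -
  have "w \<in> X" "dist ((inv_into X f ^^ (K - k)) ((f ^^ K) q)) ((inv_into X f ^^ (K - k)) w) \<le> \<eta>"
    using assms(2) unfolding Wu_eps_def finv_def by auto
  then show ?thesis
    using funpow_inv_funpow_le[OF bij] inv_funpow_diff_funpow[OF bij] assms(1,3)
    by (simp add: dist_commute)
qed

lemma tracking_refinement:
  assumes local_product: "\<And>a b. a \<in> X \<Longrightarrow> b \<in> X \<Longrightarrow> dist a b < \<Delta> \<Longrightarrow>
      Vs_eps X f \<eta> a \<inter> Vu_eps X f \<eta> b \<noteq> {}"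
    and "q \<in> X" and q_tracks: "\<forall>\<^sub>F k in sequentially. dist ((f ^^ k) q) (x k) < \<delta>"
    and "p \<in> X" and p_shadows: "\<And>n. dist ((f ^^ n) p) (x (T + n)) < \<delta>'"
    and "\<delta> + \<delta>' \<le> \<Delta>"
  shows "\<exists>q'\<in>X. \<exists>K'>K. (\<forall>k\<le>K'. dist ((f ^^ k) q') ((f ^^ k) q) \<le> \<eta>) \<and>
    (\<forall>k\<ge>K'. dist ((f ^^ k) q') (x k) \<le> \<eta> + \<delta>') \<and>
    (\<forall>\<^sub>F k in sequentially. dist ((f ^^ k) q') (x k) < 2 * \<delta>')"
proof -
  have "0 < \<delta>'"
    using p_shadows[of 0] zero_le_dist le_less_trans by blast
  obtain N where N: "\<And>k. N \<le> k \<Longrightarrow> dist ((f ^^ k) q) (x k) < \<delta>"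
    using q_tracks unfolding eventually_sequentially by blast
  define K' where "K' = max (max (Suc K) N) T"
  define a where "a = (f ^^ K') q"
  define b where "b = (f ^^ (K' - T)) p"
  have b_tracks: "dist ((f ^^ (k - K')) b) (x k) < \<delta>'" if "K' \<le> k" for k
  proof -
    have "k - T = (k - K') + (K' - T)"
      using that K'_def by simp
    then have "(f ^^ (k - K')) b = (f ^^ (k - T)) p"
      unfolding b_def by (simp add: funpow_add)
    then show ?thesis
      using p_shadows[of "k - T"] that K'_def by simp
  qed
  have "dist a (x K') < \<delta>" "dist b (x K') < \<delta>'"
    using N[of K'] b_tracks[of K'] unfolding a_def K'_def by simp_all
  then have "dist b a < \<Delta>"
    using dist_triangle3[of b a "x K'"] \<open>\<delta> + \<delta>' \<le> \<Delta>\<close> by (simp add: dist_commute)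
  then obtain w where w: "w \<in> Vs_eps X f \<eta> b" "w \<in> Vu_eps X f \<eta> a"
    using local_product funpow_in[OF bij] \<open>p \<in> X\<close> \<open>q \<in> X\<close> unfolding a_def b_def by blast
  then have "w \<in> X" and w_stable: "\<And>n. dist ((f ^^ n) b) ((f ^^ n) w) \<le> \<eta>"
    and w_asymptotic: "(\<lambda>n. dist ((f ^^ n) b) ((f ^^ n) w)) \<longlonglongrightarrow> 0"
    unfolding Vs_eps_def Ws_def Ws_eps_def by auto
  define q' where "q' = (inv_into X f ^^ K') w"
  have q'_orbit: "(f ^^ k) q' = (f ^^ (k - K')) w" if "K' \<le> k" for k
    unfolding q'_def using funpow_inv_funpow_ge[OF bij \<open>w \<in> X\<close> that] .
  have q'_tracks: "dist ((f ^^ k) q') (x k) \<le> dist ((f ^^ (k - K')) b) ((f ^^ (k - K')) w) + \<delta>'"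
    if "K' \<le> k" for k
    using dist_triangle3[of "(f ^^ (k - K')) w" "x k" "(f ^^ (k - K')) b"] b_tracks[OF that]
    unfolding q'_orbit[OF that] by simp
  obtain M where M: "\<And>n. M \<le> n \<Longrightarrow> dist ((f ^^ n) b) ((f ^^ n) w) < \<delta>'"
    using order_tendstoD(2)[OF w_asymptotic \<open>0 < \<delta>'\<close>] unfolding eventually_sequentially by blast
  have "\<forall>\<^sub>F k in sequentially. dist ((f ^^ k) q') (x k) < 2 * \<delta>'"
    unfolding eventually_sequentially
  proof (intro exI allI impI)
    fix k assume "K' + M \<le> k"
    then have "K' \<le> k" "M \<le> k - K'" by auto
    then show "dist ((f ^^ k) q') (x k) < 2 * \<delta>'"
      using q'_tracks M by fastforce
  qed
  moreover have "\<forall>k\<ge>K'. dist ((f ^^ k) q') (x k) \<le> \<eta> + \<delta>'"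
    using q'_tracks w_stable by (meson add_right_mono order_trans)
  moreover have "\<forall>k\<le>K'. dist ((f ^^ k) q') ((f ^^ k) q) \<le> \<eta>"
    using Wu_eps_pullback[OF \<open>q \<in> X\<close>] w(2) unfolding q'_def a_def Vu_eps_def by blast
  moreover have "q' \<in> X" "K < K'"
    unfolding q'_def K'_def using inv_funpow_in[OF bij \<open>w \<in> X\<close>] by auto
  ultimately show ?thesis
    by blast
qed

lemma refining_tracking_points:
  assumes "shadowing X f" "\<And>k. x k \<in> X" "(\<lambda>k. dist (f (x k)) (x (Suc k))) \<longlonglongrightarrow> 0"
    and local_product: "\<And>j a b. a \<in> X \<Longrightarrow> b \<in> X \<Longrightarrow> dist a b < \<Delta> j \<Longrightarrow>
      Vs_eps X f (\<eta> j) a \<inter> Vu_eps X f (\<eta> j) b \<noteq> {}"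
    and \<epsilon>_pos: "\<And>j. 0 < \<epsilon> j" and \<epsilon>_le: "\<And>j. \<epsilon> j \<le> \<eta> j"
    and \<epsilon>_\<Delta>: "\<And>j. 2 * \<epsilon> j + \<epsilon> (Suc j) \<le> \<Delta> (Suc j)"
  shows "\<exists>q K. strict_mono K \<and> (\<forall>j. q j \<in> X) \<and>
    (\<forall>j k. k \<le> K (Suc j) \<longrightarrow> dist ((f ^^ k) (q (Suc j))) ((f ^^ k) (q j)) \<le> \<eta> (Suc j)) \<and>
    (\<forall>j k. K j \<le> k \<longrightarrow> dist ((f ^^ k) (q j)) (x k) \<le> 2 * \<eta> j)"
proof -
  obtain T p where "\<And>j. p j \<in> X" and p_shadows: "\<And>j n. dist ((f ^^ n) (p j)) (x (T j + n)) < \<epsilon> j"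
    using shadowing_tail[OF assms(1-3) \<epsilon>_pos] by metis
  define tracks where "tracks j s \<longleftrightarrow> fst s \<in> X \<and>
    (\<forall>k\<ge>snd s. dist ((f ^^ k) (fst s)) (x k) \<le> 2 * \<eta> j) \<and>
    (\<forall>\<^sub>F k in sequentially. dist ((f ^^ k) (fst s)) (x k) < 2 * \<epsilon> j)" for j s
  define refines where "refines j s s' \<longleftrightarrow> snd s < snd s' \<and>
    (\<forall>k\<le>snd s'. dist ((f ^^ k) (fst s')) ((f ^^ k) (fst s)) \<le> \<eta> (Suc j))" for j s s'
  have "tracks 0 ((inv_into X f ^^ T 0) (p 0), T 0)"
  proof -
    have "dist ((f ^^ k) ((inv_into X f ^^ T 0) (p 0))) (x k) < \<epsilon> 0" if "T 0 \<le> k" for k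
      using p_shadows[where j = 0 and n = "k - T 0"] funpow_inv_funpow_ge[OF bij \<open>p 0 \<in> X\<close> that] that by simp
    then show ?thesis
      unfolding tracks_def eventually_sequentially
      using inv_funpow_in[OF bij \<open>p 0 \<in> X\<close>] \<epsilon>_pos[of 0] \<epsilon>_le[of 0] by fastforce
  qed
  moreover have "\<exists>s'. tracks (Suc j) s' \<and> refines j s s'" if "tracks j s" for j s
  proof -
    have s_tracks: "fst s \<in> X" "\<forall>\<^sub>F k in sequentially. dist ((f ^^ k) (fst s)) (x k) < 2 * \<epsilon> j"
      using that unfolding tracks_def by auto
    obtain q' K' where "q' \<in> X" "snd s < K'"
      "\<forall>k\<le>K'. dist ((f ^^ k) q') ((f ^^ k) (fst s)) \<le> \<eta> (Suc j)"
      "\<forall>k\<ge>K'. dist ((f ^^ k) q') (x k) \<le> \<eta> (Suc j) + \<epsilon> (Suc j)"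
      "\<forall>\<^sub>F k in sequentially. dist ((f ^^ k) q') (x k) < 2 * \<epsilon> (Suc j)"
      using tracking_refinement[OF local_product[where j = "Suc j"] s_tracks \<open>p (Suc j) \<in> X\<close>
          p_shadows[where j = "Suc j"] \<epsilon>_\<Delta>[of j]]
      by blast
    then show ?thesis
      unfolding tracks_def refines_def using \<epsilon>_le[of "Suc j"]
      by (intro exI[of _ "(q', K')"]) fastforce
  qed
  ultimately obtain s where s: "\<And>j. tracks j (s j) \<and> refines j (s j) (s (Suc j))"
    using dependent_nat_choice[of tracks refines] by blast
  have "strict_mono (snd \<circ> s)"
    using s unfolding refines_def strict_mono_Suc_iff by simp
  then show ?thesis
    using s unfolding tracks_def refines_def by (intro exI[of _ "fst \<circ> s"] exI[of _ "snd \<circ> s"]) simp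
qed

end

theorem mainTheorem8:
  fixes X :: "'a::metric_space set" and f :: "'a \<Rightarrow> 'a"
  assumes "compact X"
    and "f ` X = X" and "inj_on f X" and "continuous_on X f"
    and "continuous_on X (inv_into X f)"
    and "shadowing X f"
    and "\<forall>\<epsilon>>0. \<exists>\<delta>>0. \<forall>x\<in>X. \<forall>y\<in>X. dist x y < \<delta> \<longrightarrow>
           Vs_eps X f \<epsilon> x \<inter> Vu_eps X f \<epsilon> y \<noteq> {}"
  shows "limit_shadowing X f"
  unfolding limit_shadowing_def
proof (intro allI impI)
  fix x :: "nat \<Rightarrow> 'a"
  assume "\<forall>k. x k \<in> X" and jumps: "(\<lambda>k. dist (f (x k)) (x (Suc k))) \<longlonglongrightarrow> 0"
  have bij: "bij_betw f X X"
    using assms(2,3) by (simp add: bij_betw_def)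
  define \<eta> :: "nat \<Rightarrow> real" where "\<eta> j = (1/2) ^ j" for j
  have "0 < \<eta> j" for j
    by (simp add: \<eta>_def)
  have "\<forall>j. \<exists>\<delta>>0. \<forall>a\<in>X. \<forall>b\<in>X. dist a b < \<delta> \<longrightarrow>
      Vs_eps X f (\<eta> j) a \<inter> Vu_eps X f (\<eta> j) b \<noteq> {}"
    using assms(7) \<open>\<And>j. 0 < \<eta> j\<close> by blast
  then obtain \<Delta> where "\<And>j. 0 < \<Delta> j" and local_product: "\<And>j a b. a \<in> X \<Longrightarrow> b \<in> X \<Longrightarrow>
      dist a b < \<Delta> j \<Longrightarrow> Vs_eps X f (\<eta> j) a \<inter> Vu_eps X f (\<eta> j) b \<noteq> {}"
    by metis
  obtain \<epsilon> where "\<And>j. 0 < \<epsilon> j" "\<And>j. \<epsilon> j \<le> \<eta> j" "\<And>j. 2 * \<epsilon> j + \<epsilon> (Suc j) \<le> \<Delta> (Suc j)"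
    using exists_tolerances[of \<eta> \<Delta>] \<open>\<And>j. 0 < \<eta> j\<close> \<open>\<And>j. 0 < \<Delta> j\<close> by blast
  then have "\<exists>q K. strict_mono K \<and> (\<forall>j. q j \<in> X) \<and>
    (\<forall>j k. k \<le> K (Suc j) \<longrightarrow> dist ((f ^^ k) (q (Suc j))) ((f ^^ k) (q j)) \<le> \<eta> (Suc j)) \<and>
    (\<forall>j k. K j \<le> k \<longrightarrow> dist ((f ^^ k) (q j)) (x k) \<le> 2 * \<eta> j)"
    using \<open>\<forall>k. x k \<in> X\<close> local_product
    by (intro refining_tracking_points[OF bij assms(6) _ jumps, where \<Delta> = \<Delta> and \<epsilon> = \<epsilon>]) auto
  then obtain q K where "strict_mono K" "\<forall>j. q j \<in> X"
    "\<forall>j k. k \<le> K (Suc j) \<longrightarrow> dist ((f ^^ k) (q (Suc j))) ((f ^^ k) (q j)) \<le> \<eta> (Suc j)"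
    "\<forall>j k. K j \<le> k \<longrightarrow> dist ((f ^^ k) (q j)) (x k) \<le> 2 * \<eta> j"
    by blast
  then show "\<exists>y\<in>X. (\<lambda>k. dist ((f ^^ k) y) (x k)) \<longlonglongrightarrow> 0"
    using limit_of_refining_orbits[OF assms(1,4), of q K x] assms(2) unfolding \<eta>_def by auto
qed

end
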